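(* Let $\{(\iota_1,z_1^* ),\dots,(\iota_J,z_J^* )\}$ be minimally degenerate, let $\vec{\mathfrak c}\in(0,\infty)^J$ be the unique unit positive vector with $\ker A^*=\mathbb{R}\vec{\mathfrak c}$, and assume $$\sum_{i=1}^J|v_i^*|^2>0,\qquad v_i^*:=\sum_{j=1}^J\frac{A^*_{ij}\mathfrak c_i\mathfrak c_j}{|z_i^*-z_j^*|^2}(z_j^*-z_i^* )\in\mathbb{R}^N.$$ Then for any $K_0>0$ and $\delta_1>0$ there exists $\delta_2>0$ such that $$\sum_{i}\lambda_i^{2D-2}(A[\vec z]\vec\lambda^D)_i^2+\sum_i\lambda_i^{2D}\Big|\sum_j\frac{A[\vec z]_{ij}\lambda_j^D(z_i-z_j)}{|z_i-z_j|^2}\Big|^2\simeq_{K_0,\delta_1}\lambda_{\max}^{2D-2}|A[\vec z]\vec\lambda^D|^2+\lambda_{\max}^{4D}$$ for all $\vec\lambda\in(0,\infty)^J$ and $\vec z\in(\mathbb{R}^N)^J$ with $\lambda_{\max}\le K_0$, $\lambda_{\mathrm{max2}}\ge\delta_1\lambda_{\max}$ and $|\vec z-\vec z^*|<\delta_2$.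
   Context: $N\ge7$, $D=\frac{N-2}2$; $\iota_i\in\{\pm1\}$, distinct $z_i^*\in\mathbb{R}^N$. For $\vec z=(z_1,\dots,z_J)$, $A[\vec z]_{ij}=\mathbf 1_{i\ne j}\kappa_0\kappa_\infty\frac{\iota_i\iota_j}{|z_i-z_j|^{N-2}}$ (fixed positive constants $\kappa_0,\kappa_\infty$) and $A^*=A[\vec z^*]$. Minimally degenerate: $A^*$ has a nonzero kernel element in $[0,\infty)^J$ but for every proper subset $\mathcal I$ with $|\mathcal I|\ge2$ the submatrix $A^*_{\mathcal I}$ has none in $[0,\infty)^{\mathcal I}$. $\vec\lambda^D=(\lambda_i^D)_i$, $\lambda_{\max}$, $\lambda_{\mathrm{max2}}$ largest and second largest $\lambda_i$; terms with $i=j$ vanish since $A[\vec z]_{ii}=0$. *)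

theory Defs
  imports "HOL-Analysis.Analysis"
begin

text \<open>Points z = (z_1,...,z_J) in (R^N)^J are elements of (real^'n)^'j; the index
type 'j is the finite index set {1..J}, 'n the coordinate set {1..N}.\<close>

definition Dexp :: "'n::finite itself \<Rightarrow> real" where
  "Dexp _ = (real CARD('n) - 2) / 2"

definition Amat :: "real \<Rightarrow> real \<Rightarrow> ('j::finite \<Rightarrow> real) \<Rightarrow> (real^'n::finite)^'j \<Rightarrow> real^'j^'j" where
  "Amat k0 kinf iota z = (\<chi> i j. if i = j then 0
      else k0 * kinf * iota i * iota j / norm (z$i - z$j) ^ (CARD('n) - 2))"

definition minimally_degenerate :: "real^'j^'j::finite \<Rightarrow> bool" where
  "minimally_degenerate M \<longleftrightarrow>
     (\<exists>x. x \<noteq> 0 \<and> (\<forall>i. x$i \<ge> 0) \<and> M *v x = 0) \<and>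
     (\<forall>I. I \<subset> (UNIV::'j set) \<and> card I \<ge> 2 \<longrightarrow>
        \<not> (\<exists>x::'j \<Rightarrow> real. (\<forall>i\<in>I. x i \<ge> 0) \<and> (\<exists>i\<in>I. x i \<noteq> 0) \<and>
               (\<forall>i\<in>I. (\<Sum>j\<in>I. M$i$j * x j) = 0)))"

definition lam_max :: "real^'j::finite \<Rightarrow> real" where
  "lam_max l = Max (range (\<lambda>i. l$i))"

text \<open>Second largest entry (counted with multiplicity).\<close>
definition lam_max2 :: "real^'j::finite \<Rightarrow> real" where
  "lam_max2 l = Max {min (l$i) (l$j) | i j. i \<noteq> j}"

definition powD :: "real^'j::finite \<Rightarrow> real \<Rightarrow> real^'j" where
  "powD l D = (\<chi> i. (l$i) powr D)"

end

theory Submission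
  imports Defs
begin

(* Both sides are homogeneous: writing lambda = s m with s = lambda_max, the left side is
   s^(4D-2) (P(m) + s^2 Q(m)) and the right side is s^(4D-2) (R(m) + s^2), where P, Q and R are
   the weighted residual, the force energy and the residual of the normalized profile m. These
   profiles form a compact set (entries in [0,1], two of them at least delta1), so it suffices to
   compare P + s^2 Q with R + s^2 uniformly for z near z*.

   P <= R is immediate and Q is bounded by compactness. Conversely, P + Q > 0 at z*: if P(m) = 0,
   minimal degeneracy forces m to have full support with m^D in ker A* = R c, and then Q(m) is a
   positive multiple of sum_i |v_i*|^2. On the kernel ray all entries of m are comparable to the
   largest one because c > 0, so P > 0 on the profiles having an entry below some epsilon, which
   gives R <= C P there; on the other profiles R <= epsilon^(2-2D) P holds termwise. Continuity in
   (m, z) and compactness make all these bounds uniform near z*.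

   Only the continuity of z -> A[z] near z* enters. *)

definition weighted_residual :: "real \<Rightarrow> real^'j^'j \<Rightarrow> real^'j::finite \<Rightarrow> real" where
  "weighted_residual D A m = (\<Sum>i\<in>UNIV. (m$i) powr (2*D - 2) * ((A *v powD m D)$i)\<^sup>2)"

definition residual :: "real \<Rightarrow> real^'j^'j \<Rightarrow> real^'j::finite \<Rightarrow> real" where
  "residual D A m = (norm (A *v powD m D))\<^sup>2"

definition force_energy :: "real \<Rightarrow> real^'j^'j \<Rightarrow> (real^'n::finite)^'j \<Rightarrow> real^'j::finite \<Rightarrow> real" where
  "force_energy D A z m = (\<Sum>i\<in>UNIV. (m$i) powr (2*D) *
      (norm (\<Sum>j\<in>UNIV. (A$i$j * powD m D$j / (norm (z$i - z$j))\<^sup>2) *\<^sub>R (z$i - z$j)))\<^sup>2)"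

definition kernel_force_energy :: "real^'j^'j \<Rightarrow> (real^'n::finite)^'j \<Rightarrow> real^'j::finite \<Rightarrow> real" where
  "kernel_force_energy A z c = (\<Sum>i\<in>UNIV. (norm (\<Sum>j\<in>UNIV.
      (A$i$j * c$i * c$j / (norm (z$i - z$j))\<^sup>2) *\<^sub>R (z$j - z$i)))\<^sup>2)"

definition normalized_profiles :: "real \<Rightarrow> (real^'j::finite) set" where
  "normalized_profiles \<delta> =
     {m. (\<forall>i. 0 \<le> m$i \<and> m$i \<le> 1) \<and> (\<exists>i j. i \<noteq> j \<and> \<delta> \<le> m$i \<and> \<delta> \<le> m$j)}"

lemma weighted_residual_nonneg: "0 \<le> weighted_residual D A m"
  unfolding weighted_residual_def by (intro sum_nonneg mult_nonneg_nonneg) auto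

lemma force_energy_nonneg: "0 \<le> force_energy D A z m"
  unfolding force_energy_def by (intro sum_nonneg mult_nonneg_nonneg) auto

lemma residual_eq_sum: "residual D A m = (\<Sum>i\<in>UNIV. ((A *v powD m D)$i)\<^sup>2)"
  unfolding residual_def power2_norm_eq_inner inner_vec_def by (simp add: power2_eq_square)

lemma weighted_residual_eq_0_iff:
  "weighted_residual D A m = 0 \<longleftrightarrow> (\<forall>i. m$i \<noteq> 0 \<longrightarrow> (A *v powD m D)$i = 0)"
  unfolding weighted_residual_def by (subst sum_nonneg_eq_0_iff) auto

lemma weighted_residual_le_residual:
  assumes "\<forall>i. 0 \<le> m$i \<and> m$i \<le> 1" "1 \<le> D"
  shows "weighted_residual D A m \<le> residual D A m"
  unfolding weighted_residual_def residual_eq_sum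
proof (rule sum_mono)
  fix i
  have "m$i powr (2*D - 2) \<le> 1" using assms by (intro powr_le1) auto
  then show "m$i powr (2*D - 2) * ((A *v powD m D)$i)\<^sup>2 \<le> ((A *v powD m D)$i)\<^sup>2"
    by (intro mult_left_le_one_le) auto
qed

lemma residual_le_weighted_residual:
  assumes "\<forall>i. \<epsilon> \<le> m$i" "0 < \<epsilon>" "1 \<le> D"
  shows "\<epsilon> powr (2*D - 2) * residual D A m \<le> weighted_residual D A m"
  unfolding weighted_residual_def residual_eq_sum sum_distrib_left
proof (rule sum_mono)
  fix i
  have "\<epsilon> powr (2*D - 2) \<le> m$i powr (2*D - 2)" using assms by (intro powr_mono2) auto
  then show "\<epsilon> powr (2*D - 2) * ((A *v powD m D)$i)\<^sup>2 \<le> m$i powr (2*D - 2) * ((A *v powD m D)$i)\<^sup>2"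
    by (intro mult_right_mono) auto
qed

lemma powD_scaleR: "powD (s *\<^sub>R m) D = (s powr D) *\<^sub>R powD m D"
  by (simp add: powD_def vec_eq_iff powr_mult)

lemma powr_double: "x powr (2*D) = (x powr D)\<^sup>2" for x D :: real
  by (simp add: power2_eq_square powr_add[symmetric])

lemma weighted_residual_scaleR:
  "weighted_residual D A (s *\<^sub>R m) = s powr (4*D - 2) * weighted_residual D A m"
proof -
  have "s powr (4*D - 2) = s powr (2*D - 2) * (s powr D)\<^sup>2"
    by (simp add: powr_double[symmetric] powr_add[symmetric])
  then show ?thesis unfolding weighted_residual_def
    by (simp add: powD_scaleR matrix_vector_mult_scaleR powr_mult sum_distrib_left
        power_mult_distrib algebra_simps)
qed

lemma residual_scaleR: "residual D A (s *\<^sub>R m) = s powr (2*D) * residual D A m"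
  unfolding residual_def powr_double
  by (simp add: powD_scaleR matrix_vector_mult_scaleR power_mult_distrib)

lemma force_energy_scaleR:
  "force_energy D A z (s *\<^sub>R m) = s powr (4*D) * force_energy D A z m"
proof -
  have "s powr (4*D) = s powr (2*D) * (s powr D)\<^sup>2"
    by (simp add: powr_double[symmetric] powr_add[symmetric])
  moreover have "(\<Sum>j\<in>UNIV. (A$i$j * powD (s *\<^sub>R m) D$j / (norm (z$i - z$j))\<^sup>2) *\<^sub>R (z$i - z$j))
     = (s powr D) *\<^sub>R (\<Sum>j\<in>UNIV. (A$i$j * powD m D$j / (norm (z$i - z$j))\<^sup>2) *\<^sub>R (z$i - z$j))" for i
    by (simp add: powD_scaleR scaleR_sum_right mult.left_commute)
  ultimately show ?thesis unfolding force_energy_def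
    by (simp add: powr_mult sum_distrib_left power_mult_distrib algebra_simps)
qed

lemma force_energy_on_kernel_ray:
  assumes "powD m D = t *\<^sub>R c"
  shows "force_energy D A z m = t^4 * kernel_force_energy A z c"
proof -
  define w where "w i = (\<Sum>j\<in>UNIV. (A$i$j * c$j / (norm (z$i - z$j))\<^sup>2) *\<^sub>R (z$i - z$j))" for i
  have m: "m$i powr D = t * c$i" for i using assms by (simp add: vec_eq_iff powD_def)
  have "(\<Sum>j\<in>UNIV. (A$i$j * powD m D$j / (norm (z$i - z$j))\<^sup>2) *\<^sub>R (z$i - z$j)) = t *\<^sub>R w i" for i
    unfolding w_def assms by (simp add: scaleR_sum_right mult.left_commute)
  moreover have "(\<Sum>j\<in>UNIV. (A$i$j * c$i * c$j / (norm (z$i - z$j))\<^sup>2) *\<^sub>R (z$j - z$i))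
      = - (c$i *\<^sub>R w i)" for i
    unfolding w_def scaleR_sum_right sum_negf[symmetric] by (rule sum.cong) (auto simp: algebra_simps)
  ultimately show ?thesis unfolding force_energy_def kernel_force_energy_def powr_double m
    by (simp add: sum_distrib_left power_mult_distrib algebra_simps)
qed

lemma continuous_on_matrix_vector_mult [continuous_intros]:
  fixes f :: "'a::topological_space \<Rightarrow> real^'m::finite^'k::finite"
  assumes "continuous_on S f" "continuous_on S g"
  shows "continuous_on S (\<lambda>x. f x *v g x)"
  unfolding matrix_vector_mult_def using assms by (intro continuous_intros)

lemma continuous_on_powD:
  assumes "continuous_on S g" "\<forall>x\<in>S. \<forall>i. 0 \<le> g x $ i" "0 < D"
  shows "continuous_on S (\<lambda>x. powD (g x) D)"
  unfolding powD_def using assms by (intro continuous_on_vec_lambda continuous_on_powr' continuous_intros) auto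

(* 1 < D keeps the exponent 2D - 2 positive: 0 powr 0 = 0 in Isabelle, so m powr 0 jumps at 0. *)
lemma continuous_on_weighted_residual:
  assumes "continuous_on S A" "continuous_on S m" "\<forall>x\<in>S. \<forall>i. 0 \<le> m x $ i" "1 < D"
  shows "continuous_on S (\<lambda>x. weighted_residual D (A x) (m x))"
  unfolding weighted_residual_def using assms
  by (intro continuous_intros continuous_on_powr' continuous_on_powD) auto

lemma continuous_on_residual:
  assumes "continuous_on S A" "continuous_on S m" "\<forall>x\<in>S. \<forall>i. 0 \<le> m x $ i" "0 < D"
  shows "continuous_on S (\<lambda>x. residual D (A x) (m x))"
  unfolding residual_def using assms by (intro continuous_intros continuous_on_powD) auto

lemma continuous_on_force_energy:
  assumes "continuous_on S A" "continuous_on S m" "continuous_on S z"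
    and "\<forall>x\<in>S. \<forall>i. 0 \<le> m x $ i" "\<forall>x\<in>S. \<forall>i j. i \<noteq> j \<longrightarrow> z x $ i \<noteq> z x $ j" "0 < D"
  shows "continuous_on S (\<lambda>x. force_energy D (A x) (z x) (m x))"
proof -
  have "continuous_on S (\<lambda>x. (A x $ i $ j * powD (m x) D $ j / (norm (z x $ i - z x $ j))\<^sup>2)
          *\<^sub>R (z x $ i - z x $ j))" for i j
  proof (cases "i = j")
    case False
    then show ?thesis using assms
      by (intro continuous_intros continuous_on_powD) auto
  qed simp
  moreover have "continuous_on S (\<lambda>x. m x $ i powr (2*D))" for i
    using assms by (intro continuous_on_powr' continuous_intros) auto
  ultimately show ?thesis unfolding force_energy_def
    by (intro continuous_on_sum continuous_on_mult continuous_on_power continuous_on_norm)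
qed

lemma continuous_on_Amat:
  "continuous_on {z. \<forall>i j. i \<noteq> j \<longrightarrow> z$i \<noteq> z$j}
     (Amat k0 kinf iota :: (real^'n::finite)^'j::finite \<Rightarrow> _)"
proof -
  have "continuous_on {z. \<forall>i j. i \<noteq> j \<longrightarrow> z$i \<noteq> z$j}
          (\<lambda>z::(real^'n::finite)^'j. if i = j then 0
             else k0 * kinf * iota i * iota j / norm (z$i - z$j) ^ (CARD('n) - 2))" for i j
    by (cases "i = j") (auto intro!: continuous_intros)
  then show ?thesis unfolding Amat_def by (intro continuous_on_vec_lambda)
qed

lemma open_distinct_configurations:
  "open {z::(real^'n::finite)^'j::finite. \<forall>i j. i \<noteq> j \<longrightarrow> z$i \<noteq> z$j}"
proof -
  have open_neq: "open {z::(real^'n)^'j. z$i \<noteq> z$j}" for i j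
    by (intro open_Collect_neq continuous_on_component continuous_on_id)
  show ?thesis unfolding Collect_all_eq
    by (intro open_INT ballI open_Collect_imp closed_Collect_const open_neq) simp_all
qed

lemma profiles_nonneg: "\<forall>m\<in>normalized_profiles \<delta>. \<forall>i. 0 \<le> m$i"
  by (simp add: normalized_profiles_def)

lemma compact_normalized_profiles: "compact (normalized_profiles \<delta>)"
proof -
  have eq: "normalized_profiles \<delta> = cbox 0 1 \<inter> (\<Union>i. \<Union>j. {m. i \<noteq> j \<and> \<delta> \<le> m$i \<and> \<delta> \<le> m$j})"
    unfolding normalized_profiles_def by (auto simp: mem_box_cart)
  have closed_pair: "closed {m::real^'j. i \<noteq> j \<and> \<delta> \<le> m$i \<and> \<delta> \<le> m$j}" for i j
    by (cases "i = j") (auto intro!: closed_Collect_conj closed_Collect_le continuous_intros)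
  have "closed (\<Union>i. \<Union>j. {m::real^'j. i \<noteq> j \<and> \<delta> \<le> m$i \<and> \<delta> \<le> m$j})"
    by (intro closed_UN ballI closed_pair) simp_all
  then show ?thesis unfolding eq by (intro compact_Int_closed compact_cbox)
qed

lemma minimally_degenerate_full_support:
  fixes M :: "real^'j^'j::finite"
  assumes degenerate: "minimally_degenerate M"
    and nonneg: "\<forall>k. 0 \<le> x$k" and two: "i \<noteq> j" "0 < x$i" "0 < x$j"
    and vanishing: "\<forall>k. 0 < x$k \<longrightarrow> (M *v x)$k = 0"
  shows "\<forall>k. 0 < x$k"
proof (rule ccontr)
  define I where "I = {k. 0 < x$k}"
  assume "\<not> (\<forall>k. 0 < x$k)"
  then have proper: "I \<subset> UNIV" by (auto simp: I_def)
  have "card {i, j} \<le> card I" by (rule card_mono) (use two in \<open>auto simp: I_def\<close>)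
  then have card: "2 \<le> card I" using two by simp
  have "(\<Sum>l\<in>I. M$k$l * x$l) = 0" if "k \<in> I" for k
  proof -
    have "(\<Sum>l\<in>I. M$k$l * x$l) = (M *v x)$k"
      unfolding matrix_vector_mult_def using nonneg
      by (force intro: sum.mono_neutral_left simp: I_def order.order_iff_strict)
    then show ?thesis using vanishing that by (simp add: I_def)
  qed
  moreover have "\<forall>k\<in>I. 0 \<le> x$k" "\<exists>k\<in>I. x$k \<noteq> 0" using nonneg two by (auto simp: I_def)
  ultimately show False
    using degenerate proper card unfolding minimally_degenerate_def by blast
qed

lemma uniformly_positive_near:
  fixes F :: "'a::metric_space \<times> 'b::heine_borel \<Rightarrow> real"
  assumes "compact M" "0 < r" and cont: "continuous_on (M \<times> cball z0 r) F"
    and pos: "\<forall>m\<in>M. 0 < F (m, z0)"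
  obtains b d where "0 < b" "0 < d" "d \<le> r" "\<And>m z. m \<in> M \<Longrightarrow> dist z0 z < d \<Longrightarrow> b \<le> F (m, z)"
proof (cases "M = {}")
  case True
  then show ?thesis using that \<open>0 < r\<close> by blast
next
  case False
  have "continuous_on M (\<lambda>m. F (m, z0))"
    by (rule continuous_on_compose2[OF cont]) (use \<open>0 < r\<close> in \<open>auto intro!: continuous_intros\<close>)
  then obtain m0 where "m0 \<in> M" and min: "\<forall>m\<in>M. F (m0, z0) \<le> F (m, z0)"
    using continuous_attains_inf[OF \<open>compact M\<close> False] by blast
  define b where "b = F (m0, z0) / 2"
  have "0 < b" using pos \<open>m0 \<in> M\<close> by (simp add: b_def)
  have "uniformly_continuous_on (M \<times> cball z0 r) F"
    using compact_uniformly_continuous[OF cont] \<open>compact M\<close> by (simp add: compact_Times)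
  then obtain d where "0 < d" and d: "\<And>p q. p \<in> M \<times> cball z0 r \<Longrightarrow> q \<in> M \<times> cball z0 r \<Longrightarrow>
      dist q p < d \<Longrightarrow> dist (F q) (F p) < b"
    unfolding uniformly_continuous_on_def using \<open>0 < b\<close> by metis
  have "b \<le> F (m, z)" if "m \<in> M" "dist z0 z < min d r" for m z
  proof -
    have "dist (F (m, z)) (F (m, z0)) < b"
      using d[of "(m, z0)" "(m, z)"] that \<open>0 < r\<close> by (simp add: dist_Pair_Pair dist_commute)
    moreover have "2 * b \<le> F (m, z0)" using min that by (simp add: b_def)
    ultimately show ?thesis by (simp add: dist_real_def abs_less_iff)
  qed
  then show ?thesis using that \<open>0 < b\<close> \<open>0 < d\<close> \<open>0 < r\<close> by (meson min.cobounded2 min_less_iff_conj)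
qed

lemma compact_continuous_bounded_above:
  fixes f :: "'a::metric_space \<Rightarrow> real"
  assumes "compact K" "continuous_on K f"
  obtains B where "\<And>x. x \<in> K \<Longrightarrow> f x \<le> B"
proof -
  have "bounded (f ` K)"
    using compact_imp_bounded[OF compact_continuous_image[OF assms(2,1)]] .
  then obtain B where "\<forall>y\<in>f ` K. \<bar>y\<bar> \<le> B" by (auto simp: bounded_real)
  then show thesis using that[of B] by (meson abs_le_D1 image_eqI)
qed

lemma comparison_upper:
  fixes P Q R B s :: real
  assumes "0 \<le> P" "P \<le> R" "0 \<le> Q" "Q \<le> B"
  shows "P + s\<^sup>2 * Q \<le> max 1 B * (R + s\<^sup>2)"
proof -
  have "s\<^sup>2 * Q \<le> max 1 B * s\<^sup>2"
    using assms by (simp add: mult.commute[of "s\<^sup>2"] mult_right_mono)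
  moreover have "P \<le> max 1 B * R"
    using assms mult_right_mono[of 1 "max 1 B" R] by simp
  ultimately show ?thesis unfolding distrib_left by linarith
qed

lemma comparison_lower:
  fixes P Q R b C K s :: real
  assumes "0 \<le> P" "0 \<le> Q" "0 < b" "b \<le> P + Q" "0 \<le> C" "R \<le> C * P" "\<bar>s\<bar> \<le> K"
  shows "R + s\<^sup>2 \<le> (C + (K\<^sup>2 + 1) / b) * (P + s\<^sup>2 * Q)"
proof -
  have "s\<^sup>2 \<le> K\<^sup>2" using power_mono[OF assms(7) abs_ge_zero, of 2] by simp
  have "b * s\<^sup>2 \<le> s\<^sup>2 * P + s\<^sup>2 * Q"
    using mult_right_mono[OF assms(4), of "s\<^sup>2"] by (simp add: algebra_simps)
  also have "\<dots> \<le> K\<^sup>2 * P + s\<^sup>2 * Q"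
    using mult_right_mono[OF \<open>s\<^sup>2 \<le> K\<^sup>2\<close> \<open>0 \<le> P\<close>] by simp
  also have "\<dots> \<le> (K\<^sup>2 + 1) * (P + s\<^sup>2 * Q)"
  proof -
    have "0 \<le> P + K\<^sup>2 * (s\<^sup>2 * Q)" using assms(1,2) by simp
    then show ?thesis by (simp add: algebra_simps)
  qed
  finally have "s\<^sup>2 \<le> (K\<^sup>2 + 1) / b * (P + s\<^sup>2 * Q)"
    using \<open>0 < b\<close> by (simp add: pos_le_divide_eq mult.commute)
  moreover have "R \<le> C * (P + s\<^sup>2 * Q)"
    using assms mult_left_mono[of P "P + s\<^sup>2 * Q" C] by simp
  ultimately show ?thesis by (simp add: distrib_right)
qed

lemma lam_max_normalization:
  fixes l :: "real^'j::finite"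
  assumes pos: "\<forall>i. 0 < l$i" and second: "\<delta> * lam_max l \<le> lam_max2 l" and "i \<noteq> (j::'j)"
  shows "0 < lam_max l" "inverse (lam_max l) *\<^sub>R l \<in> normalized_profiles \<delta>"
proof -
  have le_max: "l$k \<le> lam_max l" for k unfolding lam_max_def by (intro Max_ge) auto
  show "0 < lam_max l" using pos le_max by (meson order_less_le_trans)
  have "finite {min (l$i) (l$j) | i j. i \<noteq> j}"
    by (rule finite_subset[of _ "(\<lambda>(i, j). min (l$i) (l$j)) ` UNIV"]) auto
  moreover have "{min (l$i) (l$j) | i j. i \<noteq> j} \<noteq> {}" using \<open>i \<noteq> j\<close> by blast
  ultimately have "lam_max2 l \<in> {min (l$i) (l$j) | i j. i \<noteq> j}"
    unfolding lam_max2_def by (rule Max_in)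
  then obtain i' j' where "i' \<noteq> j'" "\<delta> * lam_max l \<le> l$i'" "\<delta> * lam_max l \<le> l$j'"
    using second by auto
  define m where "m = inverse (lam_max l) *\<^sub>R l"
  have m: "m$k = l$k / lam_max l" for k by (simp add: m_def divide_inverse mult.commute)
  have "\<forall>k. 0 \<le> m$k \<and> m$k \<le> 1"
    using pos le_max \<open>0 < lam_max l\<close> by (simp add: m less_imp_le)
  moreover have "\<delta> \<le> m$i'" "\<delta> \<le> m$j'"
    using \<open>\<delta> * lam_max l \<le> l$i'\<close> \<open>\<delta> * lam_max l \<le> l$j'\<close> \<open>0 < lam_max l\<close>
    by (simp_all add: m pos_le_divide_eq)
  ultimately show "inverse (lam_max l) *\<^sub>R l \<in> normalized_profiles \<delta>"
    unfolding normalized_profiles_def m_def[symmetric] using \<open>i' \<noteq> j'\<close> by blast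
qed

lemma powr_exponent_split:
  fixes s D :: real
  assumes "0 < s"
  shows "s powr (2*D - 2) * s powr (2*D) = s powr (4*D - 2)"
    and "s powr (4*D) = s powr (4*D - 2) * s\<^sup>2"
proof -
  show "s powr (2*D - 2) * s powr (2*D) = s powr (4*D - 2)" by (simp add: powr_add[symmetric])
  have "s powr (4*D) = s powr (4*D - 2) * s powr 2" by (simp add: powr_add[symmetric])
  then show "s powr (4*D) = s powr (4*D - 2) * s\<^sup>2" using assms by (simp add: powr_numeral)
qed

locale degenerate_configuration =
  fixes A :: "(real^'n::finite)^'j::finite \<Rightarrow> real^'j^'j"
    and zs :: "(real^'n)^'j" and r :: real and c :: "real^'j" and D :: real
  assumes r_pos: "0 < r"
    and continuous_A: "continuous_on (cball zs r) A"
    and distinct_near: "\<forall>z\<in>cball zs r. \<forall>i j. i \<noteq> j \<longrightarrow> z$i \<noteq> z$j"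
    and degenerate: "minimally_degenerate (A zs)"
    and c_pos: "\<forall>i. 0 < c$i" and c_unit: "norm c = 1"
    and kernel_eq: "{x. A zs *v x = 0} = range (\<lambda>t. t *\<^sub>R c)"
    and kernel_force_pos: "0 < kernel_force_energy (A zs) zs c"
    and D_gt_1: "1 < D"
begin

lemma two_indices: obtains i j :: 'j where "i \<noteq> j"
proof -
  have "kernel_force_energy (A zs) zs c = 0" if "\<forall>i j::'j. i = j"
  proof -
    have diff0: "zs$j - zs$i = 0" for i j using that by (metis diff_self)
    show ?thesis unfolding kernel_force_energy_def diff0 by simp
  qed
  then show ?thesis using that kernel_force_pos by force
qed

lemma kernel_ray_of_weighted_residual_eq_0:
  assumes m: "m \<in> normalized_profiles \<delta>" and "0 < \<delta>" and P0: "weighted_residual D (A zs) m = 0"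
  obtains t where "0 < t" "powD m D = t *\<^sub>R c"
proof -
  obtain i j where "i \<noteq> j" "\<delta> \<le> m$i" "\<delta> \<le> m$j" and nonneg: "\<forall>k. 0 \<le> m$k"
    using m by (auto simp: normalized_profiles_def)
  have pos_iff: "0 < powD m D $ k \<longleftrightarrow> m$k \<noteq> 0" for k
    using nonneg by (simp add: powD_def)
  have "\<forall>k. 0 < powD m D $ k \<longrightarrow> (A zs *v powD m D)$k = 0"
    using P0 by (simp add: weighted_residual_eq_0_iff pos_iff)
  then have full: "\<forall>k. 0 < powD m D $ k"
    using minimally_degenerate_full_support[OF degenerate, of "powD m D" i j] nonneg
      \<open>i \<noteq> j\<close> \<open>\<delta> \<le> m$i\<close> \<open>\<delta> \<le> m$j\<close> \<open>0 < \<delta>\<close> by (simp add: pos_iff powD_def)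
  then have "A zs *v powD m D = 0"
    using \<open>\<forall>k. 0 < powD m D $ k \<longrightarrow> _\<close> by (simp add: vec_eq_iff)
  then obtain t where t: "powD m D = t *\<^sub>R c" using kernel_eq by auto
  have "0 < t * c$i" using full[rule_format, of i] by (simp add: t)
  then have "0 < t" using c_pos[rule_format, of i] by (simp add: zero_less_mult_iff)
  then show ?thesis using that t by blast
qed

lemma weighted_residual_plus_force_energy_pos:
  assumes "m \<in> normalized_profiles \<delta>" "0 < \<delta>"
  shows "0 < weighted_residual D (A zs) m + force_energy D (A zs) zs m"
proof (cases "weighted_residual D (A zs) m = 0")
  case True
  then obtain t where "0 < t" "powD m D = t *\<^sub>R c"
    using kernel_ray_of_weighted_residual_eq_0 assms by blast
  then show ?thesis
    using True kernel_force_pos by (simp add: force_energy_on_kernel_ray)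
next
  case False
  then show ?thesis
    using weighted_residual_nonneg[of D "A zs" m] force_energy_nonneg[of D "A zs" zs m] by simp
qed

lemma weighted_residual_pos_if_small_entry:
  assumes "0 < \<delta>"
  obtains \<epsilon> where "0 < \<epsilon>"
    "\<And>m k. m \<in> normalized_profiles \<delta> \<Longrightarrow> m$k \<le> \<epsilon> \<Longrightarrow> 0 < weighted_residual D (A zs) m"
proof -
  define cmin where "cmin = Min (range (\<lambda>i. c$i))"
  have cmin_le: "cmin \<le> c$i" for i unfolding cmin_def by (intro Min_le) auto
  have "0 < cmin" unfolding cmin_def using c_pos by (subst Min_gr_iff) auto
  \<comment> \<open>On the kernel ray every entry satisfies m_k^D = t c_k >= delta^D cmin, twice epsilon^D.\<close>
  define \<epsilon> where "\<epsilon> = \<delta> * (cmin / 2) powr (1 / D)"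
  have "0 < \<epsilon>" using \<open>0 < \<delta>\<close> \<open>0 < cmin\<close> by (simp add: \<epsilon>_def)
  have \<epsilon>_pow: "\<epsilon> powr D = \<delta> powr D * (cmin / 2)"
    using D_gt_1 \<open>0 < cmin\<close> \<open>0 < \<delta>\<close> by (simp add: \<epsilon>_def powr_mult powr_powr)
  have "0 < weighted_residual D (A zs) m" if m: "m \<in> normalized_profiles \<delta>" and "m$k \<le> \<epsilon>" for m k
  proof (rule ccontr)
    assume "\<not> 0 < weighted_residual D (A zs) m"
    then have "weighted_residual D (A zs) m = 0"
      using weighted_residual_nonneg[of D "A zs" m] by simp
    then obtain t where "0 < t" and t: "powD m D = t *\<^sub>R c"
      using kernel_ray_of_weighted_residual_eq_0 m \<open>0 < \<delta>\<close> by blast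
    have mD: "m$i powr D = t * c$i" for i using t by (simp add: vec_eq_iff powD_def)
    obtain i where "\<delta> \<le> m$i" and nonneg: "\<forall>i. 0 \<le> m$i"
      using m by (auto simp: normalized_profiles_def)
    have "c$i \<le> 1" using component_le_norm_cart[of c i] c_unit by simp
    have "\<delta> powr D \<le> t * c$i"
      using \<open>\<delta> \<le> m$i\<close> \<open>0 < \<delta>\<close> D_gt_1 by (simp add: mD[symmetric] powr_mono2)
    also have "\<dots> \<le> t" using \<open>c$i \<le> 1\<close> \<open>0 < t\<close> by simp
    finally have "\<delta> powr D * cmin \<le> t * c$k"
      using cmin_le[of k] \<open>0 < cmin\<close> \<open>0 < \<delta>\<close> \<open>0 < t\<close> by (intro mult_mono) auto
    also have "\<dots> \<le> \<epsilon> powr D"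
      using \<open>m$k \<le> \<epsilon>\<close> nonneg D_gt_1 by (simp add: mD[symmetric] powr_mono2)
    finally show False
      using \<epsilon>_pow \<open>0 < cmin\<close> \<open>0 < \<delta>\<close> by simp
  qed
  then show ?thesis using that \<open>0 < \<epsilon>\<close> by blast
qed

lemma continuous_on_profiles_near_zs:
  assumes "\<forall>m\<in>M. \<forall>i. 0 \<le> m$i"
  shows "continuous_on (M \<times> cball zs r) (\<lambda>p. weighted_residual D (A (snd p)) (fst p))"
    and "continuous_on (M \<times> cball zs r) (\<lambda>p. force_energy D (A (snd p)) (snd p) (fst p))"
    and "continuous_on (M \<times> cball zs r) (\<lambda>p. residual D (A (snd p)) (fst p))"
proof -
  have A: "continuous_on (M \<times> cball zs r) (\<lambda>p. A (snd p))"
    by (rule continuous_on_compose2[OF continuous_A continuous_on_snd]) auto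
  have nonneg: "\<forall>p\<in>M \<times> cball zs r. \<forall>i. 0 \<le> fst p $ i" using assms by auto
  show "continuous_on (M \<times> cball zs r) (\<lambda>p. weighted_residual D (A (snd p)) (fst p))"
    using A nonneg D_gt_1 by (intro continuous_on_weighted_residual continuous_on_fst continuous_on_id)
  show "continuous_on (M \<times> cball zs r) (\<lambda>p. residual D (A (snd p)) (fst p))"
    using A nonneg D_gt_1 by (intro continuous_on_residual continuous_on_fst continuous_on_id) auto
  show "continuous_on (M \<times> cball zs r) (\<lambda>p. force_energy D (A (snd p)) (snd p) (fst p))"
    using A nonneg D_gt_1 distinct_near
    by (intro continuous_on_force_energy continuous_on_fst continuous_on_snd continuous_on_id) auto
qed

lemma uniform_upper_bounds:
  obtains B BR where "\<And>m z. m \<in> normalized_profiles \<delta> \<Longrightarrow> z \<in> cball zs r \<Longrightarrow>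
      force_energy D (A z) z m \<le> B \<and> residual D (A z) m \<le> BR"
proof -
  have K: "compact (normalized_profiles \<delta> \<times> cball zs r)"
    by (intro compact_Times compact_normalized_profiles compact_cball)
  note cont = continuous_on_profiles_near_zs[OF profiles_nonneg]
  obtain B where "\<And>p. p \<in> normalized_profiles \<delta> \<times> cball zs r \<Longrightarrow>
      force_energy D (A (snd p)) (snd p) (fst p) \<le> B"
    using compact_continuous_bounded_above[OF K cont(2)] by blast
  moreover obtain BR where "\<And>p. p \<in> normalized_profiles \<delta> \<times> cball zs r \<Longrightarrow>
      residual D (A (snd p)) (fst p) \<le> BR"
    using compact_continuous_bounded_above[OF K cont(3)] by blast
  ultimately show ?thesis using that by fastforce
qed

lemma uniform_lower_bound:
  assumes "0 < \<delta>"
  obtains b \<rho> where "0 < b" "0 < \<rho>" "\<And>m z. m \<in> normalized_profiles \<delta> \<Longrightarrow> dist zs z < \<rho> \<Longrightarrow>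
      b \<le> weighted_residual D (A z) m + force_energy D (A z) z m"
proof -
  note cont = continuous_on_profiles_near_zs[OF profiles_nonneg]
  show ?thesis
    using uniformly_positive_near[OF compact_normalized_profiles r_pos continuous_on_add[OF cont(1,2)]]
      weighted_residual_plus_force_energy_pos[OF _ assms] that
    by (metis fst_conv snd_conv)
qed

lemma weighted_residual_uniformly_pos_if_small_entry:
  assumes "0 < \<delta>"
  obtains \<epsilon> p0 \<rho> where "0 < \<epsilon>" "0 < p0" "0 < \<rho>" "\<rho> \<le> r"
    "\<And>m z k. m \<in> normalized_profiles \<delta> \<Longrightarrow> m$k \<le> \<epsilon> \<Longrightarrow> dist zs z < \<rho> \<Longrightarrow>
      p0 \<le> weighted_residual D (A z) m"
proof -
  obtain \<epsilon> where "0 < \<epsilon>" and small_pos: "\<And>m k. m \<in> normalized_profiles \<delta> \<Longrightarrow> m$k \<le> \<epsilon> \<Longrightarrow>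
      0 < weighted_residual D (A zs) m"
    using weighted_residual_pos_if_small_entry[OF assms] by blast
  define M :: "(real^'j) set" where "M = normalized_profiles \<delta> \<inter> (\<Union>k. {m. m$k \<le> \<epsilon>})"
  have "compact M" unfolding M_def
    by (intro compact_Int_closed compact_normalized_profiles closed_UN ballI closed_Collect_le
        continuous_intros) simp_all
  have cont: "continuous_on (M \<times> cball zs r) (\<lambda>p. weighted_residual D (A (snd p)) (fst p))"
    by (rule continuous_on_profiles_near_zs) (auto simp: M_def normalized_profiles_def)
  have "\<forall>m\<in>M. 0 < weighted_residual D (A (snd (m, zs))) (fst (m, zs))"
    using small_pos by (auto simp: M_def)
  from uniformly_positive_near[OF \<open>compact M\<close> r_pos cont this]
  obtain p0 \<rho> where "0 < p0" "0 < \<rho>" "\<rho> \<le> r" and p0: "\<And>m z. m \<in> M \<Longrightarrow> dist zs z < \<rho> \<Longrightarrow>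
      p0 \<le> weighted_residual D (A z) m"
    by (metis fst_conv snd_conv)
  show ?thesis
    using that[OF \<open>0 < \<epsilon>\<close> \<open>0 < p0\<close> \<open>0 < \<rho>\<close> \<open>\<rho> \<le> r\<close>] p0 by (auto simp: M_def)
qed

lemma residual_le_weighted_residual_near_zs:
  assumes "0 < \<delta>"
  obtains C \<rho> where "0 \<le> C" "0 < \<rho>" "\<rho> \<le> r" "\<And>m z. m \<in> normalized_profiles \<delta> \<Longrightarrow> dist zs z < \<rho> \<Longrightarrow>
      residual D (A z) m \<le> C * weighted_residual D (A z) m"
proof -
  obtain \<epsilon> p0 \<rho> where "0 < \<epsilon>" "0 < p0" "0 < \<rho>" "\<rho> \<le> r" and p0: "\<And>m z k.
      m \<in> normalized_profiles \<delta> \<Longrightarrow> m$k \<le> \<epsilon> \<Longrightarrow> dist zs z < \<rho> \<Longrightarrow> p0 \<le> weighted_residual D (A z) m"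
    using weighted_residual_uniformly_pos_if_small_entry[OF assms] by metis
  obtain BR where BR: "\<And>m z. m \<in> normalized_profiles \<delta> \<Longrightarrow> z \<in> cball zs r \<Longrightarrow> residual D (A z) m \<le> BR"
    using uniform_upper_bounds by metis
  define C where "C = max (1 / \<epsilon> powr (2*D - 2)) (BR / p0)"
  have "residual D (A z) m \<le> C * weighted_residual D (A z) m"
    if m: "m \<in> normalized_profiles \<delta>" and z: "dist zs z < \<rho>" for m z
  proof (cases "\<forall>k. \<epsilon> \<le> m$k")
    case True
    then have "\<epsilon> powr (2*D - 2) * residual D (A z) m \<le> weighted_residual D (A z) m"
      using \<open>0 < \<epsilon>\<close> D_gt_1 by (intro residual_le_weighted_residual) auto
    then have "residual D (A z) m \<le> 1 / \<epsilon> powr (2*D - 2) * weighted_residual D (A z) m"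
      using \<open>0 < \<epsilon>\<close> by (simp add: pos_le_divide_eq mult.commute)
    also have "\<dots> \<le> C * weighted_residual D (A z) m"
      by (intro mult_right_mono weighted_residual_nonneg) (simp add: C_def)
    finally show ?thesis .
  next
    case False
    then obtain k where "m$k \<le> \<epsilon>" by (meson nle_le)
    then have P: "p0 \<le> weighted_residual D (A z) m" using p0 m z by blast
    have R: "residual D (A z) m \<le> BR" using BR m z \<open>\<rho> \<le> r\<close> by (simp add: dist_commute)
    have "0 \<le> BR" using R order_trans zero_le_power2 unfolding residual_def by blast
    have "residual D (A z) m \<le> BR / p0 * p0" using R \<open>0 < p0\<close> by simp
    also have "\<dots> \<le> BR / p0 * weighted_residual D (A z) m"
      using P \<open>0 \<le> BR\<close> \<open>0 < p0\<close> by (intro mult_left_mono) auto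
    also have "\<dots> \<le> C * weighted_residual D (A z) m"
      by (intro mult_right_mono weighted_residual_nonneg) (simp add: C_def)
    finally show ?thesis .
  qed
  moreover have "0 \<le> C" using \<open>0 < \<epsilon>\<close> by (simp add: C_def le_max_iff_disj)
  ultimately show ?thesis using that \<open>0 < \<rho>\<close> \<open>\<rho> \<le> r\<close> by blast
qed

lemma normalized_two_sided_estimate:
  assumes "0 < \<delta>"
  obtains \<rho> C where "0 < \<rho>" "0 < C"
    "\<And>m z s. m \<in> normalized_profiles \<delta> \<Longrightarrow> dist zs z < \<rho> \<Longrightarrow> \<bar>s\<bar> \<le> K \<Longrightarrow>
       weighted_residual D (A z) m + s\<^sup>2 * force_energy D (A z) z m \<le> C * (residual D (A z) m + s\<^sup>2)
     \<and> residual D (A z) m + s\<^sup>2 \<le> C * (weighted_residual D (A z) m + s\<^sup>2 * force_energy D (A z) z m)"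
proof -
  obtain B BR where upper: "\<And>m z. m \<in> normalized_profiles \<delta> \<Longrightarrow> z \<in> cball zs r \<Longrightarrow>
      force_energy D (A z) z m \<le> B \<and> residual D (A z) m \<le> BR"
    using uniform_upper_bounds by metis
  obtain b \<rho>1 where "0 < b" "0 < \<rho>1" and lower: "\<And>m z. m \<in> normalized_profiles \<delta> \<Longrightarrow>
      dist zs z < \<rho>1 \<Longrightarrow> b \<le> weighted_residual D (A z) m + force_energy D (A z) z m"
    using uniform_lower_bound[OF assms] by metis
  obtain C1 \<rho>2 where "0 \<le> C1" "0 < \<rho>2" "\<rho>2 \<le> r" and control: "\<And>m z. m \<in> normalized_profiles \<delta> \<Longrightarrow>
      dist zs z < \<rho>2 \<Longrightarrow> residual D (A z) m \<le> C1 * weighted_residual D (A z) m"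
    using residual_le_weighted_residual_near_zs[OF assms] by metis
  define C where "C = max (max 1 B) (C1 + (K\<^sup>2 + 1) / b)"
  have "weighted_residual D (A z) m + s\<^sup>2 * force_energy D (A z) z m \<le> C * (residual D (A z) m + s\<^sup>2)
     \<and> residual D (A z) m + s\<^sup>2 \<le> C * (weighted_residual D (A z) m + s\<^sup>2 * force_energy D (A z) z m)"
    if m: "m \<in> normalized_profiles \<delta>" and z: "dist zs z < min \<rho>1 \<rho>2" and s: "\<bar>s\<bar> \<le> K" for m z s
  proof -
    let ?P = "weighted_residual D (A z) m" and ?Q = "force_energy D (A z) z m"
      and ?R = "residual D (A z) m"
    have "z \<in> cball zs r" using z \<open>\<rho>2 \<le> r\<close> by simp
    have "?P \<le> ?R"
      using m D_gt_1 by (intro weighted_residual_le_residual) (auto simp: normalized_profiles_def)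
    then have "?P + s\<^sup>2 * ?Q \<le> max 1 B * (?R + s\<^sup>2)"
      using upper[OF m \<open>z \<in> cball zs r\<close>]
      by (intro comparison_upper weighted_residual_nonneg force_energy_nonneg) auto
    also have "\<dots> \<le> C * (?R + s\<^sup>2)"
      unfolding C_def by (intro mult_right_mono) (auto simp: residual_def)
    finally have "?P + s\<^sup>2 * ?Q \<le> C * (?R + s\<^sup>2)" .
    moreover have "?R + s\<^sup>2 \<le> (C1 + (K\<^sup>2 + 1) / b) * (?P + s\<^sup>2 * ?Q)"
      using lower[OF m] control[OF m] z s \<open>0 < b\<close> \<open>0 \<le> C1\<close>
      by (intro comparison_lower weighted_residual_nonneg force_energy_nonneg) auto
    moreover have "\<dots> \<le> C * (?P + s\<^sup>2 * ?Q)"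
      unfolding C_def
      by (intro mult_right_mono add_nonneg_nonneg mult_nonneg_nonneg weighted_residual_nonneg
          force_energy_nonneg) auto
    ultimately show ?thesis by linarith
  qed
  moreover have "0 < C" by (simp add: C_def less_max_iff_disj)
  ultimately show ?thesis using that \<open>0 < \<rho>1\<close> \<open>0 < \<rho>2\<close> by (metis min_less_iff_conj)
qed

lemma two_sided_estimate:
  assumes "0 < \<delta>"
  shows "\<exists>\<rho>>0. \<exists>C>0. \<forall>l z.
    (\<forall>i. 0 < l$i) \<and> lam_max l \<le> K \<and> \<delta> * lam_max l \<le> lam_max2 l \<and> norm (z - zs) < \<rho> \<longrightarrow>
    (let lhs = weighted_residual D (A z) l + force_energy D (A z) z l;
         rhs = lam_max l powr (2*D - 2) * residual D (A z) l + lam_max l powr (4*D)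
     in lhs \<le> C * rhs \<and> rhs \<le> C * lhs)"
proof -
  obtain i j :: 'j where "i \<noteq> j" using two_indices .
  obtain \<rho> C where "0 < \<rho>" "0 < C" and comparable: "\<And>m z s. m \<in> normalized_profiles \<delta> \<Longrightarrow>
      dist zs z < \<rho> \<Longrightarrow> \<bar>s\<bar> \<le> K \<Longrightarrow>
       weighted_residual D (A z) m + s\<^sup>2 * force_energy D (A z) z m \<le> C * (residual D (A z) m + s\<^sup>2)
     \<and> residual D (A z) m + s\<^sup>2 \<le> C * (weighted_residual D (A z) m + s\<^sup>2 * force_energy D (A z) z m)"
    using normalized_two_sided_estimate[OF assms] by metis
  have "let lhs = weighted_residual D (A z) l + force_energy D (A z) z l;
           rhs = lam_max l powr (2*D - 2) * residual D (A z) l + lam_max l powr (4*D)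
       in lhs \<le> C * rhs \<and> rhs \<le> C * lhs"
    if l: "\<forall>i. 0 < l$i" "lam_max l \<le> K" "\<delta> * lam_max l \<le> lam_max2 l" and "norm (z - zs) < \<rho>"
    for l z
  proof -
    have z: "dist zs z < \<rho>" using \<open>norm (z - zs) < \<rho>\<close> by (simp add: dist_norm norm_minus_commute)
    define s where "s = lam_max l"
    define m where "m = inverse s *\<^sub>R l"
    have "0 < s" "m \<in> normalized_profiles \<delta>"
      using lam_max_normalization[OF l(1,3) \<open>i \<noteq> j\<close>] by (simp_all add: s_def m_def)
    have l_eq: "l = s *\<^sub>R m" using \<open>0 < s\<close> by (simp add: m_def)
    let ?a = "s powr (4*D - 2)"
    have "weighted_residual D (A z) l + force_energy D (A z) z l
        = ?a * (weighted_residual D (A z) m + s\<^sup>2 * force_energy D (A z) z m)"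
      unfolding l_eq weighted_residual_scaleR force_energy_scaleR powr_exponent_split[OF \<open>0 < s\<close>]
      by (simp add: algebra_simps)
    moreover have "s powr (2*D - 2) * residual D (A z) l + s powr (4*D)
        = ?a * (residual D (A z) m + s\<^sup>2)"
      unfolding l_eq residual_scaleR mult.assoc[symmetric] powr_exponent_split[OF \<open>0 < s\<close>]
      by (simp add: algebra_simps)
    moreover have "\<bar>s\<bar> \<le> K" using l(2) \<open>0 < s\<close> by (simp add: s_def)
    ultimately show ?thesis
      using comparable[OF \<open>m \<in> normalized_profiles \<delta>\<close> z] \<open>0 < s\<close>
      by (simp add: Let_def s_def[symmetric] mult_left_mono mult.left_commute[of C])
  qed
  then show ?thesis using \<open>0 < \<rho>\<close> \<open>0 < C\<close> by blast
qed

end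

theorem lemma4p6:
  fixes k0 kinf :: real
    and iota :: "'j::finite \<Rightarrow> real"
    and zs :: "(real^'n::finite)^'j"
    and c :: "real^'j"
  assumes N7: "CARD('n) \<ge> 7"
    and kpos: "k0 > 0" "kinf > 0"
    and iota: "\<forall>i. iota i \<in> {-1, 1}"
    and distinct: "\<forall>i j. i \<noteq> j \<longrightarrow> zs$i \<noteq> zs$j"
    and mindeg: "minimally_degenerate (Amat k0 kinf iota zs)"
    and cpos: "\<forall>i. c$i > 0" and cunit: "norm c = 1"
    and ckern: "{x. Amat k0 kinf iota zs *v x = 0} = range (\<lambda>t. t *\<^sub>R c)"
    and vpos: "(\<Sum>i\<in>UNIV. (norm (\<Sum>j\<in>UNIV.
                  (Amat k0 kinf iota zs $ i $ j * c$i * c$j / (norm (zs$i - zs$j))\<^sup>2)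
                    *\<^sub>R (zs$j - zs$i)))\<^sup>2) > 0"
  shows "\<forall>K0 > 0. \<forall>\<delta>1 > 0. \<exists>\<delta>2 > 0. \<exists>C > 0. \<forall>(l::real^'j) (z::(real^'n)^'j).
     (\<forall>i. l$i > 0) \<and> lam_max l \<le> K0 \<and> lam_max2 l \<ge> \<delta>1 * lam_max l \<and> norm (z - zs) < \<delta>2
     \<longrightarrow>
     (let D = Dexp TYPE('n); A = Amat k0 kinf iota z; lD = powD l D;
          LHS = (\<Sum>i\<in>UNIV. (l$i) powr (2*D - 2) * ((A *v lD)$i)\<^sup>2)
              + (\<Sum>i\<in>UNIV. (l$i) powr (2*D) *
                   (norm (\<Sum>j\<in>UNIV. (A$i$j * lD$j / (norm (z$i - z$j))\<^sup>2) *\<^sub>R (z$i - z$j)))\<^sup>2);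
          RHS = (lam_max l) powr (2*D - 2) * (norm (A *v lD))\<^sup>2 + (lam_max l) powr (4*D)
      in LHS \<le> C * RHS \<and> RHS \<le> C * LHS)"
proof (intro allI impI, goal_cases)
  case (1 K0 \<delta>1)
  define D where "D = Dexp TYPE('n)"
  have "1 < D" using N7 by (simp add: D_def Dexp_def)
  define S where "S = {z::(real^'n)^'j. \<forall>i j. i \<noteq> j \<longrightarrow> z$i \<noteq> z$j}"
  have "open S" "zs \<in> S" using open_distinct_configurations distinct by (simp_all add: S_def)
  then obtain r where "0 < r" and r: "cball zs r \<subseteq> S" by (auto simp: open_contains_cball)
  have "continuous_on (cball zs r) (Amat k0 kinf iota)"
    using continuous_on_subset[OF continuous_on_Amat r[unfolded S_def]] .
  moreover have "\<forall>z\<in>cball zs r. \<forall>i j. i \<noteq> j \<longrightarrow> z$i \<noteq> z$j" using r by (auto simp: S_def)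
  moreover have "0 < kernel_force_energy (Amat k0 kinf iota zs) zs c"
    using vpos unfolding kernel_force_energy_def .
  ultimately interpret degenerate_configuration "Amat k0 kinf iota" zs r c D
    using \<open>0 < r\<close> mindeg cpos cunit ckern \<open>1 < D\<close> by unfold_locales
  show ?case
    using two_sided_estimate[OF \<open>0 < \<delta>1\<close>, of K0]
    unfolding Let_def D_def[symmetric] weighted_residual_def force_energy_def residual_def .
qed

end
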